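(* Let $K$ be a simplicial complex on the vertex set $[m]$. If $K_{I\cup J}=\partial\Delta^I*\partial\Delta^J$ for some non-empty $I,J\subset[m]$ with $I\cap J=\emptyset$, then $K$ is not Golod, i.e. $\Bbbk[K]$ is not Golod for any commutative ring $\Bbbk$.
   Context: $K_S=\{\sigma\in K\mid\sigma\subset S\}$ is the full subcomplex on $S$; $\Delta^S$ is the full simplex on a finite set $S$, $\partial\Delta^S$ its boundary (all proper subsets of $S$), and $*$ is the join. The Stanley–Reisner ring is $\Bbbk[K]=\Bbbk[v_1,\ldots,v_m]/(v_I\mid I\notin K)$, $|v_i|=2$, $v_I=\prod_{i\in I}v_i$; it is Golod if all products and (higher) Massey products in the positive-degree part of $\mathrm{Tor}_{\Bbbk[v_1,\ldots,v_m]}(\Bbbk[K],\Bbbk)$ are trivial, with these operations induced from the Koszul resolution of $\Bbbk$ tensored with $\Bbbk[K]$. *)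

theory Defs
  imports Main
begin

definition simplicial_complex :: "nat \<Rightarrow> nat set set \<Rightarrow> bool" where
  "simplicial_complex m K \<longleftrightarrow> K \<subseteq> Pow {1..m} \<and> {} \<in> K \<and>
     (\<forall>\<sigma> \<tau>. \<sigma> \<in> K \<and> \<tau> \<subseteq> \<sigma> \<longrightarrow> \<tau> \<in> K)"

definition full_subcomplex :: "nat set set \<Rightarrow> nat set \<Rightarrow> nat set set" where
  "full_subcomplex K S = {\<sigma> \<in> K. \<sigma> \<subseteq> S}"

definition simplex_boundary :: "nat set \<Rightarrow> nat set set" where
  "simplex_boundary S = {\<sigma>. \<sigma> \<subset> S}"

definition sc_join :: "nat set set \<Rightarrow> nat set set \<Rightarrow> nat set set" where
  "sc_join A B = {\<sigma> \<union> \<tau> | \<sigma> \<tau>. \<sigma> \<in> A \<and> \<tau> \<in> B}"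

section \<open>Koszul complex \<Lambda>[u_1..u_m] \<otimes> k[K], in the standard basis u_J v^\<alpha>, supp \<alpha> \<in> K\<close>

type_synonym 'k kel = "nat set \<times> (nat \<Rightarrow> nat) \<Rightarrow> 'k"

definition kbasis :: "nat \<Rightarrow> nat set set \<Rightarrow> (nat set \<times> (nat \<Rightarrow> nat)) set" where
  "kbasis m K = {(J, \<alpha>). J \<subseteq> {1..m} \<and> (\<forall>i. i \<notin> {1..m} \<longrightarrow> \<alpha> i = 0) \<and> {i. \<alpha> i \<noteq> 0} \<in> K}"

definition ksupp :: "'k::zero kel \<Rightarrow> (nat set \<times> (nat \<Rightarrow> nat)) set" where
  "ksupp x = {b. x b \<noteq> 0}"

definition kelem :: "nat \<Rightarrow> nat set set \<Rightarrow> 'k::zero kel \<Rightarrow> bool" where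
  "kelem m K x \<longleftrightarrow> finite (ksupp x) \<and> ksupp x \<subseteq> kbasis m K"

text \<open>sign of u_A u_B = (sign) u_{A \<union> B} for disjoint A, B\<close>
definition ext_sign :: "nat set \<Rightarrow> nat set \<Rightarrow> 'k::comm_ring_1" where
  "ext_sign A B = (-1) ^ card {(a, b). a \<in> A \<and> b \<in> B \<and> b < a}"

definition kmult :: "nat \<Rightarrow> nat set set \<Rightarrow> 'k::comm_ring_1 kel \<Rightarrow> 'k kel \<Rightarrow> 'k kel" where
  "kmult m K x y = (\<lambda>(J, \<gamma>). if (J, \<gamma>) \<in> kbasis m K then
      (\<Sum>p \<in> {(b1, b2) \<in> ksupp x \<times> ksupp y. fst b1 \<inter> fst b2 = {} \<and> fst b1 \<union> fst b2 = J
                \<and> (\<lambda>i. snd b1 i + snd b2 i) = \<gamma>}.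
          ext_sign (fst (fst p)) (fst (snd p)) * x (fst p) * y (snd p))
    else 0)"

text \<open>Koszul differential d(u_j) = v_j, d(v_j) = 0, extended as a derivation\<close>
definition kdiff :: "nat \<Rightarrow> nat set set \<Rightarrow> 'k::comm_ring_1 kel \<Rightarrow> 'k kel" where
  "kdiff m K x = (\<lambda>(J, \<gamma>). if (J, \<gamma>) \<in> kbasis m K then
      (\<Sum>j \<in> {j \<in> {1..m}. j \<notin> J \<and> 1 \<le> \<gamma> j}.
          (-1) ^ card {l \<in> J. l < j} * x (insert j J, \<gamma>(j := \<gamma> j - 1)))
    else 0)"

text \<open>total degree of u_J v^\<alpha> (|u_i| = 1 = -1+2, |v_i| = 2), and a-bar = (-1)^(1+deg a) a\<close>
definition kdeg :: "nat \<Rightarrow> nat set \<times> (nat \<Rightarrow> nat) \<Rightarrow> nat" where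
  "kdeg m b = card (fst b) + 2 * (\<Sum>i\<in>{1..m}. snd b i)"

definition kbar :: "'k::comm_ring_1 kel \<Rightarrow> 'k kel" where
  "kbar x = (\<lambda>(J, \<alpha>). (-1) ^ Suc (card J) * x (J, \<alpha>))"

definition kcycle :: "nat \<Rightarrow> nat set set \<Rightarrow> 'k::comm_ring_1 kel \<Rightarrow> bool" where
  "kcycle m K x \<longleftrightarrow> kelem m K x \<and> kdiff m K x = (\<lambda>_. 0)"

definition kboundary :: "nat \<Rightarrow> nat set set \<Rightarrow> 'k::comm_ring_1 kel \<Rightarrow> bool" where
  "kboundary m K x \<longleftrightarrow> (\<exists>y. kelem m K y \<and> kdiff m K y = x)"

definition khomologous :: "nat \<Rightarrow> nat set set \<Rightarrow> 'k::comm_ring_1 kel \<Rightarrow> 'k kel \<Rightarrow> bool" where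
  "khomologous m K x y \<longleftrightarrow> kboundary m K (\<lambda>b. x b - y b)"

definition kpositive :: "nat \<Rightarrow> 'k::zero kel \<Rightarrow> bool" where
  "kpositive m x \<longleftrightarrow> (\<exists>t>0. \<forall>b \<in> ksupp x. kdeg m b = t)"

definition defining_system :: "nat \<Rightarrow> nat set set \<Rightarrow> nat \<Rightarrow> (nat \<Rightarrow> 'k::comm_ring_1 kel)
    \<Rightarrow> (nat \<Rightarrow> nat \<Rightarrow> 'k kel) \<Rightarrow> bool" where
  "defining_system m K n c A \<longleftrightarrow>
     (\<forall>i\<in>{1..n}. kelem m K (A i i) \<and> khomologous m K (A i i) (c i)) \<and>
     (\<forall>i j. 1 \<le> i \<and> i < j \<and> j \<le> n \<and> (i, j) \<noteq> (1, n) \<longrightarrow>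
        kelem m K (A i j) \<and>
        kdiff m K (A i j) = (\<lambda>b. \<Sum>k\<in>{i..<j}. kmult m K (kbar (A i k)) (A (Suc k) j) b))"

definition massey_value :: "nat \<Rightarrow> nat set set \<Rightarrow> nat \<Rightarrow> (nat \<Rightarrow> nat \<Rightarrow> 'k::comm_ring_1 kel) \<Rightarrow> 'k kel" where
  "massey_value m K n A = (\<lambda>b. \<Sum>k\<in>{1..<n}. kmult m K (kbar (A 1 k)) (A (Suc k) n) b)"

text \<open>k[K] is Golod: every (n \<ge> 2)-fold product / Massey product of positive-degree
  classes of Tor(k[K],k) = H(\<Lambda>[u] \<otimes> k[K], d) contains zero whenever it is defined\<close>
definition golod :: "'k::comm_ring_1 itself \<Rightarrow> nat \<Rightarrow> nat set set \<Rightarrow> bool" where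
  "golod _ m K \<longleftrightarrow>
     (\<forall>n \<ge> 2. \<forall>c :: nat \<Rightarrow> 'k kel.
        (\<forall>i\<in>{1..n}. kcycle m K (c i) \<and> kpositive m (c i)) \<longrightarrow>
        (\<exists>A. defining_system m K n c A) \<longrightarrow>
        (\<exists>A. defining_system m K n c A \<and> kboundary m K (massey_value m K n A)))"

end

theory Submission
  imports Defs "HOL-Library.Disjoint_Sets" "HOL-Library.Indicator_Function"
begin

text \<open>Pick \<open>i \<in> I\<close> and \<open>i' \<in> J\<close>. As \<open>I\<close> and \<open>J\<close> are minimal non-faces, \<open>u\<^sub>i v\<^bsub>I-i\<^esub>\<close> and
  \<open>u\<^bsub>i'\<^esub> v\<^bsub>J-i'\<^esub>\<close> are Koszul cycles of positive degree, so Golodness (already for 2-fold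
  products) makes some product of representatives of their classes a boundary. The linear functional
  \<open>x \<mapsto> \<Sum>\<^bsub>a\<in>I, a'\<in>J\<^esub> \<plusminus> x(u\<^sub>a u\<^bsub>a'\<^esub> v\<^bsub>I\<union>J-{a,a'}\<^esub>)\<close> kills all boundaries, since every
  \<open>I \<union> J - {a,a'}\<close> is a face and the terms of \<open>d w\<close> cancel in pairs. By the Leibniz rule its value on
  a product of cycles depends only on their classes, and on \<open>u\<^sub>i v\<^bsub>I-i\<^esub> \<cdot> u\<^bsub>i'\<^esub> v\<^bsub>J-i'\<^esub>\<close> it is \<open>1\<close>.
  Hence \<open>1 = 0\<close> in \<open>\<bbbk>\<close>.\<close>

section \<open>Signs\<close>

definition count_below :: "nat set \<Rightarrow> nat \<Rightarrow> nat" where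
  "count_below A j = card {l\<in>A. l < j}"

definition count_above :: "nat set \<Rightarrow> nat \<Rightarrow> nat" where
  "count_above A j = card {l\<in>A. j < l}"

definition inversions :: "nat set \<Rightarrow> nat set \<Rightarrow> nat" where
  "inversions A B = card {(a, b). a \<in> A \<and> b \<in> B \<and> b < a}"

text \<open>The sign in \<open>u\<^sub>j u\<^sub>A = insert_sign A j \<cdot> u\<^bsub>A \<union> {j}\<^esub>\<close>, as in the Koszul differential.\<close>
definition insert_sign :: "nat set \<Rightarrow> nat \<Rightarrow> 'k::comm_ring_1" where
  "insert_sign A j = (-1) ^ count_below A j"

lemma count_below_plus_count_above:
  "finite A \<Longrightarrow> j \<notin> A \<Longrightarrow> count_below A j + count_above A j = card A"
proof -
  assume fin: "finite A" and j: "j \<notin> A"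
  have "A = {l\<in>A. l < j} \<union> {l\<in>A. j < l}" using j by (auto, metis linorder_neqE_nat)
  moreover have "{l\<in>A. l < j} \<inter> {l\<in>A. j < l} = {}" by auto
  ultimately show ?thesis unfolding count_below_def count_above_def using fin
    by (metis (no_types, lifting) card_Un_disjoint finite_Un)
qed

lemma count_below_Un:
  "finite A \<Longrightarrow> finite B \<Longrightarrow> A \<inter> B = {} \<Longrightarrow> count_below (A \<union> B) j = count_below A j + count_below B j"
proof -
  assume "finite A" "finite B" "A \<inter> B = {}"
  moreover have "{l\<in>A\<union>B. l < j} = {l\<in>A. l < j} \<union> {l\<in>B. l < j}" by auto
  ultimately show ?thesis unfolding count_below_def by (simp add: card_Un_disjoint disjoint_iff)
qed

lemma count_below_insert:
  "finite A \<Longrightarrow> j \<notin> A \<Longrightarrow> count_below (insert j A) k = count_below A k + (if j < k then 1 else 0)"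
proof -
  assume "finite A" "j \<notin> A"
  moreover have "{l \<in> insert j A. l < k} = (if j < k then insert j {l\<in>A. l < k} else {l\<in>A. l < k})"
    by auto
  ultimately show ?thesis unfolding count_below_def by simp
qed

lemma ext_sign_eq: "ext_sign A B = (-1) ^ inversions A B"
  unfolding ext_sign_def inversions_def by simp

lemma inversions_insert_left:
  assumes "finite A" "finite B" "j \<notin> A"
  shows "inversions (insert j A) B = inversions A B + count_below B j"
proof -
  have split: "{(a, b). a \<in> insert j A \<and> b \<in> B \<and> b < a}
      = {(a, b). a \<in> A \<and> b \<in> B \<and> b < a} \<union> (\<lambda>b. (j,b)) ` {l\<in>B. l < j}"
    by auto
  have "finite {(a, b). a \<in> A \<and> b \<in> B \<and> b < a}"
    by (rule finite_subset[of _ "A \<times> B"]) (use assms in auto)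
  moreover have "card ((\<lambda>b. (j,b)) ` {l\<in>B. l < j}) = card {l\<in>B. l < j}"
    by (rule card_image) (auto simp: inj_on_def)
  ultimately show ?thesis unfolding inversions_def count_below_def split using assms
    by (subst card_Un_disjoint) auto
qed

lemma inversions_insert_right:
  assumes "finite A" "finite B" "j \<notin> B"
  shows "inversions A (insert j B) = inversions A B + count_above A j"
proof -
  have split: "{(a, b). a \<in> A \<and> b \<in> insert j B \<and> b < a}
      = {(a, b). a \<in> A \<and> b \<in> B \<and> b < a} \<union> (\<lambda>a. (a,j)) ` {l\<in>A. j < l}"
    by auto
  have "finite {(a, b). a \<in> A \<and> b \<in> B \<and> b < a}"
    by (rule finite_subset[of _ "A \<times> B"]) (use assms in auto)
  moreover have "card ((\<lambda>a. (a,j)) ` {l\<in>A. j < l}) = card {l\<in>A. j < l}"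
    by (rule card_image) (auto simp: inj_on_def)
  ultimately show ?thesis unfolding inversions_def count_above_def split using assms
    by (subst card_Un_disjoint) auto
qed

lemma minus_one_power_eq_if_even_add: "even (a + b) \<Longrightarrow> (-1::'k::comm_ring_1) ^ a = (-1) ^ b"
  by (metis (no_types, lifting) even_add minus_one_power_iff)

lemma insert_sign_ext_sign_insert_left:
  assumes "finite A" "finite B" "j \<notin> A" "j \<notin> B" "A \<inter> B = {}"
  shows "(insert_sign (A \<union> B) j :: 'k::comm_ring_1) * ext_sign (insert j A) B
       = ext_sign A B * insert_sign A j"
  using assms unfolding insert_sign_def ext_sign_eq
  by (simp add: inversions_insert_left count_below_Un power_add[symmetric])
     (rule minus_one_power_eq_if_even_add, presburger)

lemma insert_sign_ext_sign_insert_right: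
  assumes "finite A" "finite B" "j \<notin> A" "j \<notin> B" "A \<inter> B = {}"
  shows "(insert_sign (A \<union> B) j :: 'k::comm_ring_1) * ext_sign A (insert j B)
       = ext_sign A B * (-1) ^ card A * insert_sign B j"
proof -
  have "count_below A j + count_above A j = card A"
    using assms count_below_plus_count_above by blast
  then show ?thesis using assms unfolding insert_sign_def ext_sign_eq
    by (simp add: inversions_insert_right count_below_Un power_add[symmetric])
       (rule minus_one_power_eq_if_even_add, presburger)
qed

lemma ext_sign_move_right_to_left:
  assumes "finite A" "finite B" "j \<notin> A" "j \<notin> B"
  shows "(ext_sign A (insert j B) :: 'k::comm_ring_1) * insert_sign A j
       = - (ext_sign (insert j A) B * (-1) ^ card (insert j A) * insert_sign B j)"
proof -
  have "count_below A j + count_above A j = card A"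
    using assms count_below_plus_count_above by blast
  then show ?thesis using assms unfolding insert_sign_def ext_sign_eq
    by (simp add: inversions_insert_right inversions_insert_left power_add[symmetric])
       (rule minus_one_power_eq_if_even_add, presburger)
qed

lemma insert_sign_swap:
  assumes "finite J" "j \<notin> J" "k \<notin> J" "j \<noteq> k"
  shows "(insert_sign J j :: 'k::comm_ring_1) * insert_sign (insert j J) k
       = - (insert_sign J k * insert_sign (insert k J) j)"
  using assms unfolding insert_sign_def
  by (cases "j < k") (auto simp: count_below_insert power_add)

section \<open>Products and differentials in the Koszul basis\<close>

type_synonym kmono = "nat set \<times> (nat \<Rightarrow> nat)"

definition kdecomp :: "kmono \<Rightarrow> (kmono \<times> kmono) set" where
  "kdecomp b = {(b1, b2). fst b1 \<inter> fst b2 = {} \<and> fst b1 \<union> fst b2 = fst b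
                          \<and> (\<lambda>i. snd b1 i + snd b2 i) = snd b}"

definition kterm :: "'k::comm_ring_1 kel \<Rightarrow> 'k kel \<Rightarrow> kmono \<times> kmono \<Rightarrow> 'k" where
  "kterm x y p = ext_sign (fst (fst p)) (fst (snd p)) * x (fst p) * y (snd p)"

definition kdiff_support :: "nat \<Rightarrow> kmono \<Rightarrow> nat set" where
  "kdiff_support m b = {j \<in> {1..m}. j \<notin> fst b \<and> 1 \<le> snd b j}"

lemma kdecomp_iff:
  "((A,a),(B,c)) \<in> kdecomp (J,g) \<longleftrightarrow> A \<inter> B = {} \<and> A \<union> B = J \<and> (\<forall>i. a i + c i = g i)"
  unfolding kdecomp_def by (auto simp: fun_eq_iff)

lemma finite_kdecomp:
  assumes "finite J" "\<forall>i. i \<notin> {1..m} \<longrightarrow> g i = 0"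
  shows "finite (kdecomp (J, g))"
proof -
  define M where "M = Max (g ` {1..m})"
  let ?F = "{a. \<forall>i. (i \<in> {1..m} \<longrightarrow> a i \<in> {0..M}) \<and> (i \<notin> {1..m} \<longrightarrow> a i = 0)}"
  have "finite ?F" by (rule finite_set_of_finite_funs) auto
  moreover have "kdecomp (J, g) \<subseteq> (\<lambda>(A,a). ((A,a),(J-A, \<lambda>i. g i - a i))) ` (Pow J \<times> ?F)"
  proof
    fix p assume p: "p \<in> kdecomp (J, g)"
    obtain A a B c where p_eq: "p = ((A,a),(B,c))" by (metis prod.collapse)
    have AB: "A \<inter> B = {}" "A \<union> B = J" and ac: "\<And>i. a i + c i = g i"
      using p unfolding p_eq kdecomp_iff by auto
    have "\<forall>i. (i \<in> {1..m} \<longrightarrow> a i \<in> {0..M}) \<and> (i \<notin> {1..m} \<longrightarrow> a i = 0)"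
    proof (intro allI conjI impI)
      fix i assume "i \<in> {1..m}"
      then have "g i \<le> M" unfolding M_def by simp
      then show "a i \<in> {0..M}" using ac[of i] by auto
    next
      fix i assume "i \<notin> {1..m}" then show "a i = 0" using assms(2) ac[of i] by auto
    qed
    then have "a \<in> ?F" by simp
    moreover have "B = J - A" "c = (\<lambda>i. g i - a i)"
      using AB ac by (auto simp: fun_eq_iff, metis add_diff_cancel_left')
    ultimately show "p \<in> (\<lambda>(A,a). ((A,a),(J-A, \<lambda>i. g i - a i))) ` (Pow J \<times> ?F)"
      unfolding p_eq using AB by (auto intro!: image_eqI[of _ _ "(A,a)"])
  qed
  moreover have "finite (Pow J \<times> ?F)" using assms(1) \<open>finite ?F\<close> by simp
  ultimately show ?thesis using finite_subset by blast
qed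

lemma kbasisD:
  "(J, g) \<in> kbasis m K \<Longrightarrow> J \<subseteq> {1..m} \<and> (\<forall>i. i \<notin> {1..m} \<longrightarrow> g i = 0) \<and> {i. g i \<noteq> 0} \<in> K"
  unfolding kbasis_def by auto

lemma finite_kbasis_fst: "(J, g) \<in> kbasis m K \<Longrightarrow> finite J"
  unfolding kbasis_def using finite_subset by auto

lemma finite_kdecomp_kbasis: "b \<in> kbasis m K \<Longrightarrow> finite (kdecomp b)"
proof (cases b)
  case (Pair J g)
  assume "b \<in> kbasis m K"
  then show ?thesis unfolding Pair
    by (intro finite_kdecomp[where m = m]) (auto dest: kbasisD finite_kbasis_fst)
qed

lemma kbasis_mono:
  assumes "simplicial_complex m K" "(J, g) \<in> kbasis m K" "J' \<subseteq> J" "\<forall>i. g' i \<le> g i"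
  shows "(J', g') \<in> kbasis m K"
proof -
  have "{i. g' i \<noteq> 0} \<subseteq> {i. g i \<noteq> 0}"
    using assms(4) by (metis (mono_tags) le_zero_eq mem_Collect_eq subsetI)
  then have "{i. g' i \<noteq> 0} \<in> K"
    using assms(1,2) unfolding kbasis_def simplicial_complex_def by blast
  moreover have "\<forall>i. i \<notin> {1..m} \<longrightarrow> g' i = 0"
    using assms(2,4) unfolding kbasis_def
    by (metis (mono_tags, lifting) case_prod_conv le_zero_eq mem_Collect_eq)
  ultimately show ?thesis using assms(2,3) unfolding kbasis_def by auto
qed

lemma kbasis_insert:
  assumes "simplicial_complex m K" "(J, g) \<in> kbasis m K" "j \<in> {1..m}"
  shows "(insert j J, g(j := g j - 1)) \<in> kbasis m K"
proof -
  have "{i. (g(j := g j - 1)) i \<noteq> 0} \<subseteq> {i. g i \<noteq> 0}" by auto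
  then have "{i. (g(j := g j - 1)) i \<noteq> 0} \<in> K"
    using assms(1,2) unfolding kbasis_def simplicial_complex_def by blast
  then show ?thesis using assms(2,3) unfolding kbasis_def by auto
qed

lemma kdecomp_kbasis:
  assumes "simplicial_complex m K" "b \<in> kbasis m K" "p \<in> kdecomp b"
  shows "fst p \<in> kbasis m K" "snd p \<in> kbasis m K"
proof -
  obtain J g A a B c where eq: "b = (J,g)" "p = ((A,a),(B,c))" by (metis prod.collapse)
  have "A \<union> B = J" "\<forall>i. a i + c i = g i" using assms(3) unfolding eq kdecomp_iff by auto
  moreover have "\<forall>i. a i \<le> g i" "\<forall>i. c i \<le> g i"
    using \<open>\<forall>i. a i + c i = g i\<close> by (metis le_add1, metis le_add2)
  ultimately have "(A,a) \<in> kbasis m K" "(B,c) \<in> kbasis m K"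
    by (auto intro: kbasis_mono[OF assms(1) assms(2)[unfolded eq]])
  then show "fst p \<in> kbasis m K" "snd p \<in> kbasis m K" unfolding eq by simp_all
qed

lemma kmult_eq_sum_kdecomp:
  assumes "b \<in> kbasis m K"
  shows "kmult m K x y b = (\<Sum>p\<in>kdecomp b. kterm x y p)"
proof -
  obtain J g where b_eq: "b = (J, g)" by fastforce
  have "kmult m K x y b = (\<Sum>p\<in>{(b1, b2) \<in> ksupp x \<times> ksupp y. fst b1 \<inter> fst b2 = {}
          \<and> fst b1 \<union> fst b2 = J \<and> (\<lambda>i. snd b1 i + snd b2 i) = g}. kterm x y p)"
    using assms unfolding b_eq kmult_def kterm_def by simp
  also have "\<dots> = (\<Sum>p\<in>kdecomp b. kterm x y p)"
  proof (rule sum.mono_neutral_left)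
    show "finite (kdecomp b)" by (rule finite_kdecomp_kbasis[OF assms])
  qed (auto simp: b_eq kdecomp_def kterm_def ksupp_def)
  finally show ?thesis .
qed

lemma kdiff_eq_sum:
  assumes "b \<in> kbasis m K"
  shows "kdiff m K x b = (\<Sum>j\<in>kdiff_support m b.
           insert_sign (fst b) j * x (insert j (fst b), (snd b)(j := snd b j - 1)))"
  using assms unfolding kdiff_def kdiff_support_def insert_sign_def count_below_def
  by (cases b) simp

section \<open>The Leibniz rule\<close>

definition kparity :: "'k::comm_ring_1 kel \<Rightarrow> 'k kel" where
  "kparity x = (\<lambda>b. (-1) ^ card (fst b) * x b)"

text \<open>The \<open>j\<close>-th summands of \<open>kterm (kdiff m K x) y p\<close> and of \<open>kterm (kparity x) (kdiff m K y) p\<close>.\<close>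

definition kdiff_left_term :: "'k::comm_ring_1 kel \<Rightarrow> 'k kel \<Rightarrow> kmono \<times> kmono \<Rightarrow> nat \<Rightarrow> 'k" where
  "kdiff_left_term x y p j = ext_sign (fst (fst p)) (fst (snd p))
     * (insert_sign (fst (fst p)) j * x (insert j (fst (fst p)), (snd (fst p))(j := snd (fst p) j - 1)))
     * y (snd p)"

definition kdiff_right_term :: "'k::comm_ring_1 kel \<Rightarrow> 'k kel \<Rightarrow> kmono \<times> kmono \<Rightarrow> nat \<Rightarrow> 'k" where
  "kdiff_right_term x y p j = ext_sign (fst (fst p)) (fst (snd p))
     * ((-1) ^ card (fst (fst p)) * x (fst p))
     * (insert_sign (fst (snd p)) j * y (insert j (fst (snd p)), (snd (snd p))(j := snd (snd p) j - 1)))"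

text \<open>Moving the index \<open>j\<close> from the right factor into the left one matches the terms of
  \<open>d x \<cdot> y\<close> in which \<open>u\<^sub>j\<close> ends up in \<open>y\<close>'s slot with the terms of \<open>\<plusminus>x \<cdot> d y\<close> in which
  it ends up in \<open>x\<close>'s slot, with opposite signs.\<close>

lemma kdiff_cross_terms_cancel:
  assumes fJ: "finite J"
  shows "(\<Sum>p\<in>{p\<in>kdecomp (J,g). j \<in> kdiff_support m (fst p) \<and> j \<in> fst (snd p)}. kdiff_left_term x y p j)
       + (\<Sum>p\<in>{p\<in>kdecomp (J,g). j \<in> kdiff_support m (snd p) \<and> j \<in> fst (fst p)}. kdiff_right_term x y p j)
       = (0::'k::comm_ring_1)"
proof -
  let ?SL = "{p\<in>kdecomp (J,g). j \<in> kdiff_support m (fst p) \<and> j \<in> fst (snd p)}"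
  let ?SR = "{p\<in>kdecomp (J,g). j \<in> kdiff_support m (snd p) \<and> j \<in> fst (fst p)}"
  let ?to_left = "\<lambda>((A::nat set, a::nat \<Rightarrow> nat), (B::nat set, c::nat \<Rightarrow> nat)).
                    ((insert j A, a(j := a j - 1)), (B - {j}, c(j := c j + 1)))"
  let ?to_right = "\<lambda>((A::nat set, a::nat \<Rightarrow> nat), (B::nat set, c::nat \<Rightarrow> nat)).
                    ((A - {j}, a(j := a j + 1)), (insert j B, c(j := c j - 1)))"
  have "(\<Sum>p\<in>?SL. - kdiff_left_term x y p j) = (\<Sum>p\<in>?SR. kdiff_right_term x y p j)"
  proof (rule sum.reindex_bij_witness[where i = ?to_right and j = ?to_left])
    fix p assume "p \<in> ?SL"
    then obtain A a B c where p_eq: "p = ((A,a),(B,c))"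
      and h: "A \<inter> B = {}" "A \<union> B = J" "\<forall>i. a i + c i = g i" "j \<in> {1..m}" "j \<notin> A" "1 \<le> a j" "j \<in> B"
      by (cases p) (auto simp: kdecomp_iff kdiff_support_def)
    have gj: "1 \<le> g j" "a j + c j = g j" using h(3,6) by (metis le_add1 order_trans)+
    show "?to_right (?to_left p) = p" using h gj unfolding p_eq by auto
    show "?to_left p \<in> ?SR"
      using h gj(1) unfolding p_eq by (auto simp: kdecomp_iff kdiff_support_def)
    have "(ext_sign A (insert j (B - {j})) :: 'k) * insert_sign A j
        = - (ext_sign (insert j A) (B - {j}) * (-1) ^ card (insert j A) * insert_sign (B - {j}) j)"
      by (rule ext_sign_move_right_to_left) (use h fJ in auto)
    moreover have "insert j (B - {j}) = B" using h by auto
    ultimately have sign: "insert_sign (B - {j}) j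
          * ((-1) ^ card (insert j A) * ext_sign (insert j A) (B - {j}))
        = - (ext_sign A B * insert_sign A j :: 'k)"
      by (simp add: mult_ac)
    let ?X = "x (insert j A, a(j := a j - 1)) * y (B, c)"
    have "kdiff_right_term x y (?to_left p) j
        = (insert_sign (B - {j}) j * ((-1) ^ card (insert j A) * ext_sign (insert j A) (B - {j}))) * ?X"
      unfolding p_eq kdiff_right_term_def using h(7) by (simp add: insert_absorb algebra_simps)
    also have "\<dots> = - kdiff_left_term x y p j"
      unfolding sign p_eq kdiff_left_term_def by (simp add: algebra_simps)
    finally show "kdiff_right_term x y (?to_left p) j = - kdiff_left_term x y p j" .
  next
    fix p assume "p \<in> ?SR"
    then obtain A a B c where p_eq: "p = ((A,a),(B,c))"
      and h: "A \<inter> B = {}" "A \<union> B = J" "\<forall>i. a i + c i = g i" "j \<in> {1..m}" "j \<notin> B" "1 \<le> c j" "j \<in> A"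
      by (cases p) (auto simp: kdecomp_iff kdiff_support_def)
    have "1 \<le> g j" using h(3,6) by (metis le_add2 order_trans)
    then show "?to_left (?to_right p) = p" "?to_right p \<in> ?SL"
      using h unfolding p_eq by (auto simp: kdecomp_iff kdiff_support_def)
  qed
  then show ?thesis by (simp add: sum_negf flip: neg_eq_iff_add_eq_0)
qed

lemma kmult_insert_left_terms:
  assumes fJ: "finite J" and j: "j \<in> kdiff_support m (J,g)"
  shows "(\<Sum>p\<in>{p\<in>kdecomp (insert j J, g(j:=g j - 1)). j \<in> fst (fst p)}. insert_sign J j * kterm x y p)
       = (\<Sum>p\<in>{p\<in>kdecomp (J,g). j \<in> kdiff_support m (fst p) \<and> j \<notin> fst (snd p)}.
            (kdiff_left_term x y p j :: 'k::comm_ring_1))"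
proof -
  have jJ: "j \<notin> J" "1 \<le> g j" "j \<in> {1..m}" using j by (auto simp: kdiff_support_def)
  let ?remove = "\<lambda>((A::nat set, a::nat \<Rightarrow> nat), (B::nat set, c::nat \<Rightarrow> nat)).
                   ((A - {j}, a(j := a j + 1)), (B, c))"
  let ?insert = "\<lambda>((A::nat set, a::nat \<Rightarrow> nat), (B::nat set, c::nat \<Rightarrow> nat)).
                   ((insert j A, a(j := a j - 1)), (B, c))"
  show ?thesis
  proof (rule sum.reindex_bij_witness[where i = ?insert and j = ?remove])
    fix p assume "p \<in> {p\<in>kdecomp (insert j J, g(j:=g j - 1)). j \<in> fst (fst p)}"
    then obtain A a B c where p_eq: "p = ((A,a),(B,c))"
      and h: "A \<inter> B = {}" "A \<union> B = insert j J" "\<forall>i. a i + c i = (g(j:=g j - 1)) i" "j \<in> A"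
      by (cases p) (auto simp: kdecomp_iff)
    show "?insert (?remove p) = p" using h unfolding p_eq by (auto simp: insert_absorb)
    show "?remove p \<in> {p\<in>kdecomp (J,g). j \<in> kdiff_support m (fst p) \<and> j \<notin> fst (snd p)}"
      using h jJ unfolding p_eq by (auto simp: kdecomp_iff kdiff_support_def)
    have "(insert_sign ((A - {j}) \<union> B) j :: 'k) * ext_sign (insert j (A - {j})) B
        = ext_sign (A - {j}) B * insert_sign (A - {j}) j"
      by (rule insert_sign_ext_sign_insert_left) (use h fJ in \<open>auto intro: finite_subset\<close>)
    moreover have "(A - {j}) \<union> B = J" "insert j (A - {j}) = A" using h jJ by auto
    ultimately have sign:
        "(insert_sign J j :: 'k) * ext_sign A B = ext_sign (A - {j}) B * insert_sign (A - {j}) j"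
      by simp
    have "kdiff_left_term x y (?remove p) j
        = (ext_sign (A - {j}) B * insert_sign (A - {j}) j) * (x (A,a) * y (B,c))"
      unfolding p_eq kdiff_left_term_def using h(4) by (simp add: insert_absorb algebra_simps)
    also have "\<dots> = insert_sign J j * kterm x y p"
      unfolding sign[symmetric] p_eq kterm_def by (simp add: algebra_simps)
    finally show "kdiff_left_term x y (?remove p) j = insert_sign J j * kterm x y p" .
  next
    fix p assume "p \<in> {p\<in>kdecomp (J,g). j \<in> kdiff_support m (fst p) \<and> j \<notin> fst (snd p)}"
    then obtain A a B c where p_eq: "p = ((A,a),(B,c))"
      and "A \<inter> B = {}" "A \<union> B = J" "\<forall>i. a i + c i = g i" "j \<notin> A" "1 \<le> a j" "j \<notin> B"
      by (cases p) (auto simp: kdecomp_iff kdiff_support_def)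
    then show "?remove (?insert p) = p"
      "?insert p \<in> {p\<in>kdecomp (insert j J, g(j:=g j - 1)). j \<in> fst (fst p)}"
      unfolding p_eq by (auto simp: kdecomp_iff)
  qed
qed

lemma kmult_insert_right_terms:
  assumes fJ: "finite J" and j: "j \<in> kdiff_support m (J,g)"
  shows "(\<Sum>p\<in>{p\<in>kdecomp (insert j J, g(j:=g j - 1)). j \<in> fst (snd p)}. insert_sign J j * kterm x y p)
       = (\<Sum>p\<in>{p\<in>kdecomp (J,g). j \<in> kdiff_support m (snd p) \<and> j \<notin> fst (fst p)}.
            (kdiff_right_term x y p j :: 'k::comm_ring_1))"
proof -
  have jJ: "j \<notin> J" "1 \<le> g j" "j \<in> {1..m}" using j by (auto simp: kdiff_support_def)
  let ?remove = "\<lambda>((A::nat set, a::nat \<Rightarrow> nat), (B::nat set, c::nat \<Rightarrow> nat)).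
                   ((A, a), (B - {j}, c(j := c j + 1)))"
  let ?insert = "\<lambda>((A::nat set, a::nat \<Rightarrow> nat), (B::nat set, c::nat \<Rightarrow> nat)).
                   ((A, a), (insert j B, c(j := c j - 1)))"
  show ?thesis
  proof (rule sum.reindex_bij_witness[where i = ?insert and j = ?remove])
    fix p assume "p \<in> {p\<in>kdecomp (insert j J, g(j:=g j - 1)). j \<in> fst (snd p)}"
    then obtain A a B c where p_eq: "p = ((A,a),(B,c))"
      and h: "A \<inter> B = {}" "A \<union> B = insert j J" "\<forall>i. a i + c i = (g(j:=g j - 1)) i" "j \<in> B"
      by (cases p) (auto simp: kdecomp_iff)
    show "?insert (?remove p) = p" using h unfolding p_eq by (auto simp: insert_absorb)
    show "?remove p \<in> {p\<in>kdecomp (J,g). j \<in> kdiff_support m (snd p) \<and> j \<notin> fst (fst p)}"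
      using h jJ unfolding p_eq by (auto simp: kdecomp_iff kdiff_support_def)
    have "(insert_sign (A \<union> (B - {j})) j :: 'k) * ext_sign A (insert j (B - {j}))
        = ext_sign A (B - {j}) * (-1) ^ card A * insert_sign (B - {j}) j"
      by (rule insert_sign_ext_sign_insert_right) (use h fJ in \<open>auto intro: finite_subset\<close>)
    moreover have "A \<union> (B - {j}) = J" "insert j (B - {j}) = B" using h jJ by auto
    ultimately have sign: "(insert_sign J j :: 'k) * ext_sign A B
        = ext_sign A (B - {j}) * (-1) ^ card A * insert_sign (B - {j}) j"
      by simp
    have "kdiff_right_term x y (?remove p) j
        = (ext_sign A (B - {j}) * (-1) ^ card A * insert_sign (B - {j}) j) * (x (A,a) * y (B,c))"
      unfolding p_eq kdiff_right_term_def using h(4) by (simp add: insert_absorb algebra_simps)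
    also have "\<dots> = insert_sign J j * kterm x y p"
      unfolding sign[symmetric] p_eq kterm_def by (simp add: algebra_simps)
    finally show "kdiff_right_term x y (?remove p) j = insert_sign J j * kterm x y p" .
  next
    fix p assume "p \<in> {p\<in>kdecomp (J,g). j \<in> kdiff_support m (snd p) \<and> j \<notin> fst (fst p)}"
    then obtain A a B c where p_eq: "p = ((A,a),(B,c))"
      and "A \<inter> B = {}" "A \<union> B = J" "\<forall>i. a i + c i = g i" "j \<notin> B" "1 \<le> c j" "j \<notin> A"
      by (cases p) (auto simp: kdecomp_iff kdiff_support_def)
    then show "?remove (?insert p) = p"
      "?insert p \<in> {p\<in>kdecomp (insert j J, g(j:=g j - 1)). j \<in> fst (snd p)}"
      unfolding p_eq by (auto simp: kdecomp_iff)
  qed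
qed

lemma kdiff_kmult_summand:
  assumes fJ: "finite J" and fg: "\<forall>i. i \<notin> {1..m} \<longrightarrow> g i = 0" and jm: "j \<in> {1..m}"
  shows "(if j \<in> kdiff_support m (J,g)
          then (\<Sum>p\<in>kdecomp (insert j J, g(j:=g j - 1)). insert_sign J j * kterm x y p) else 0)
    = (\<Sum>p\<in>{p\<in>kdecomp (J,g). j \<in> kdiff_support m (fst p)}. kdiff_left_term x y p j)
      + (\<Sum>p\<in>{p\<in>kdecomp (J,g). j \<in> kdiff_support m (snd p)}.
           (kdiff_right_term x y p j :: 'k::comm_ring_1))"
proof -
  let ?L = "\<lambda>P. \<Sum>p\<in>{p\<in>kdecomp (J,g). j \<in> kdiff_support m (fst p) \<and> P p}. kdiff_left_term x y p j"
  let ?R = "\<lambda>P. \<Sum>p\<in>{p\<in>kdecomp (J,g). j \<in> kdiff_support m (snd p) \<and> P p}. kdiff_right_term x y p j"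
  have fd: "finite (kdecomp (J,g))" by (rule finite_kdecomp[OF fJ fg])
  have split: "(\<Sum>p\<in>{p\<in>kdecomp (J,g). Q p}. f p)
      = (\<Sum>p\<in>{p\<in>kdecomp (J,g). Q p \<and> \<not> P p}. f p) + (\<Sum>p\<in>{p\<in>kdecomp (J,g). Q p \<and> P p}. f p)"
    for Q P and f :: "kmono \<times> kmono \<Rightarrow> 'k"
  proof -
    have "{p\<in>kdecomp (J,g). Q p} = {p\<in>kdecomp (J,g). Q p \<and> \<not> P p} \<union> {p\<in>kdecomp (J,g). Q p \<and> P p}"
      by auto
    then show ?thesis by (simp add: sum.union_disjoint fd disjoint_iff)
  qed
  have "(\<Sum>p\<in>{p\<in>kdecomp (J,g). j \<in> kdiff_support m (fst p)}. kdiff_left_term x y p j)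
      + (\<Sum>p\<in>{p\<in>kdecomp (J,g). j \<in> kdiff_support m (snd p)}. kdiff_right_term x y p j)
      = ?L (\<lambda>p. j \<notin> fst (snd p)) + ?R (\<lambda>p. j \<notin> fst (fst p))"
    using kdiff_cross_terms_cancel[OF fJ, where m = m and g = g and j = j and x = x and y = y]
      split[where Q = "\<lambda>p. j \<in> kdiff_support m (fst p)" and P = "\<lambda>p. j \<in> fst (snd p)"]
      split[where Q = "\<lambda>p. j \<in> kdiff_support m (snd p)" and P = "\<lambda>p. j \<in> fst (fst p)"]
    by (simp add: algebra_simps)
  moreover have "?L (\<lambda>p. j \<notin> fst (snd p)) + ?R (\<lambda>p. j \<notin> fst (fst p))
      = (\<Sum>p\<in>kdecomp (insert j J, g(j:=g j - 1)). insert_sign J j * kterm x y p)"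
    if j: "j \<in> kdiff_support m (J,g)"
  proof -
    let ?D = "kdecomp (insert j J, g(j:=g j - 1))"
    have "finite ?D" by (rule finite_kdecomp) (use fJ fg jm in auto)
    have D: "?D = {p\<in>?D. j \<in> fst (fst p)} \<union> {p\<in>?D. j \<in> fst (snd p)}"
      by (auto simp: kdecomp_def)
    have "(\<Sum>p\<in>?D. insert_sign J j * kterm x y p)
        = (\<Sum>p\<in>{p\<in>?D. j \<in> fst (fst p)}. insert_sign J j * kterm x y p)
          + (\<Sum>p\<in>{p\<in>?D. j \<in> fst (snd p)}. insert_sign J j * kterm x y p)"
      by (subst D, rule sum.union_disjoint) (use \<open>finite ?D\<close> in \<open>auto simp: kdecomp_def\<close>)
    then show ?thesis
      using kmult_insert_left_terms[OF fJ j, of x y] kmult_insert_right_terms[OF fJ j, of x y] by simp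
  qed
  moreover have "?L (\<lambda>p. j \<notin> fst (snd p)) = 0" "?R (\<lambda>p. j \<notin> fst (fst p)) = 0"
    if "j \<notin> kdiff_support m (J,g)"
    using that by (auto intro!: sum.neutral simp: kdecomp_def kdiff_support_def)
  ultimately show ?thesis by auto
qed

lemma sum_kdiff_support_swap:
  assumes "finite D"
  shows "(\<Sum>j\<in>{1..m}. \<Sum>p\<in>{p\<in>D. j \<in> kdiff_support m (f p)}. G p j)
       = (\<Sum>p\<in>D. \<Sum>j\<in>kdiff_support m (f p). G p j)"
proof -
  have "(\<Sum>p\<in>D. \<Sum>j\<in>kdiff_support m (f p). G p j)
      = (\<Sum>j\<in>{1..m}. \<Sum>p\<in>{p\<in>D. j \<notin> fst (f p) \<and> 1 \<le> snd (f p) j}. G p j)"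
    unfolding kdiff_support_def by (rule sum.swap_restrict[OF assms finite_atLeastAtMost])
  also have "\<dots> = (\<Sum>j\<in>{1..m}. \<Sum>p\<in>{p\<in>D. j \<in> kdiff_support m (f p)}. G p j)"
    by (rule sum.cong[OF refl], rule sum.cong) (auto simp: kdiff_support_def)
  finally show ?thesis by (rule sym)
qed

lemma kdiff_kmult:
  assumes sc: "simplicial_complex m K"
  shows "kdiff m K (kmult m K x y) b
       = kmult m K (kdiff m K x) y b + kmult m K (kparity x) (kdiff m K y) b"
proof (cases "b \<in> kbasis m K")
  case False
  then show ?thesis by (cases b) (simp add: kdiff_def kmult_def)
next
  case True
  obtain J g where b_eq: "b = (J,g)" by fastforce
  have kb: "(J,g) \<in> kbasis m K" using True b_eq by simp
  have fJ: "finite J" and fg: "\<forall>i. i \<notin> {1..m} \<longrightarrow> g i = 0"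
    using kbasisD[OF kb] finite_kbasis_fst[OF kb] by auto
  have fd: "finite (kdecomp (J,g))" by (rule finite_kdecomp[OF fJ fg])
  let ?L = "\<lambda>p. \<Sum>j\<in>kdiff_support m (fst p). kdiff_left_term x y p j"
  let ?R = "\<lambda>p. \<Sum>j\<in>kdiff_support m (snd p). kdiff_right_term x y p j"
  have "kdiff m K (kmult m K x y) b = (\<Sum>j\<in>kdiff_support m (J,g).
          insert_sign J j * (\<Sum>p\<in>kdecomp (insert j J, g(j:=g j - 1)). kterm x y p))"
    unfolding b_eq kdiff_eq_sum[OF kb] fst_conv snd_conv
    by (rule sum.cong[OF refl], subst kmult_eq_sum_kdecomp[OF kbasis_insert[OF sc kb]])
       (auto simp: kdiff_support_def)
  also have "\<dots> = (\<Sum>j\<in>{1..m}. if j \<in> kdiff_support m (J,g)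
          then (\<Sum>p\<in>kdecomp (insert j J, g(j:=g j - 1)). insert_sign J j * kterm x y p) else 0)"
    by (subst sum.inter_restrict[symmetric])
       (auto simp: sum_distrib_left kdiff_support_def intro!: sum.cong)
  also have "\<dots> = (\<Sum>j\<in>{1..m}. (\<Sum>p\<in>{p\<in>kdecomp (J,g). j \<in> kdiff_support m (fst p)}. kdiff_left_term x y p j)
                     + (\<Sum>p\<in>{p\<in>kdecomp (J,g). j \<in> kdiff_support m (snd p)}. kdiff_right_term x y p j))"
    by (rule sum.cong) (auto simp: kdiff_kmult_summand[OF fJ fg])
  also have "\<dots> = (\<Sum>p\<in>kdecomp (J,g). ?L p) + (\<Sum>p\<in>kdecomp (J,g). ?R p)"
    unfolding sum.distrib sum_kdiff_support_swap[OF fd] ..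
  also have "(\<Sum>p\<in>kdecomp (J,g). ?L p) = kmult m K (kdiff m K x) y b"
    unfolding b_eq kmult_eq_sum_kdecomp[OF kb]
  proof (rule sum.cong[OF refl])
    fix p assume "p \<in> kdecomp (J,g)"
    then have "fst p \<in> kbasis m K" by (rule kdecomp_kbasis[OF sc kb])
    then show "?L p = kterm (kdiff m K x) y p"
      unfolding kterm_def kdiff_eq_sum[OF \<open>fst p \<in> kbasis m K\<close>] kdiff_left_term_def
      by (simp add: sum_distrib_left sum_distrib_right)
  qed
  also have "(\<Sum>p\<in>kdecomp (J,g). ?R p) = kmult m K (kparity x) (kdiff m K y) b"
    unfolding b_eq kmult_eq_sum_kdecomp[OF kb]
  proof (rule sum.cong[OF refl])
    fix p assume "p \<in> kdecomp (J,g)"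
    then have "snd p \<in> kbasis m K" by (rule kdecomp_kbasis[OF sc kb])
    then show "?R p = kterm (kparity x) (kdiff m K y) p"
      unfolding kterm_def kdiff_eq_sum[OF \<open>snd p \<in> kbasis m K\<close>] kdiff_right_term_def kparity_def
      by (simp add: sum_distrib_left sum_distrib_right)
  qed
  finally show ?thesis .
qed

section \<open>Boundaries and cycles\<close>

lemma kdiff_kdiff:
  assumes sc: "simplicial_complex m K"
  shows "kdiff m K (kdiff m K (x :: 'k::comm_ring_1 kel)) b = 0"
proof (cases "b \<in> kbasis m K")
  case False
  then show ?thesis by (cases b) (simp add: kdiff_def)
next
  case True
  obtain J g where b_eq: "b = (J,g)" by fastforce
  have kb: "(J,g) \<in> kbasis m K" using True b_eq by simp
  have fJ: "finite J" by (rule finite_kbasis_fst[OF kb])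
  let ?g = "\<lambda>j k. insert_sign J j * insert_sign (insert j J) k
                  * x (insert k (insert j J), g(j := g j - 1, k := g k - 1))"
  let ?T = "Sigma (kdiff_support m (J,g)) (\<lambda>j. kdiff_support m (insert j J, g(j := g j - 1)))"
  have "kdiff m K (kdiff m K x) b = (\<Sum>j\<in>kdiff_support m (J,g).
          insert_sign J j * kdiff m K x (insert j J, g(j := g j - 1)))"
    unfolding b_eq by (simp add: kdiff_eq_sum[OF kb])
  also have "\<dots> = (\<Sum>j\<in>kdiff_support m (J,g). \<Sum>k\<in>kdiff_support m (insert j J, g(j := g j - 1)). ?g j k)"
  proof (rule sum.cong[OF refl])
    fix j assume "j \<in> kdiff_support m (J,g)"
    then have kb_j: "(insert j J, g(j := g j - 1)) \<in> kbasis m K"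
      using kbasis_insert[OF sc kb] by (auto simp: kdiff_support_def)
    show "insert_sign J j * kdiff m K x (insert j J, g(j := g j - 1))
        = (\<Sum>k\<in>kdiff_support m (insert j J, g(j := g j - 1)). ?g j k)"
      unfolding kdiff_eq_sum[OF kb_j] sum_distrib_left
      by (rule sum.cong[OF refl]) (auto simp: kdiff_support_def mult.assoc)
  qed
  also have "\<dots> = (\<Sum>(j, k)\<in>?T. ?g j k)"
    by (rule sum.Sigma) (auto simp: kdiff_support_def simp del: fun_upd_apply)
  also have "\<dots> = 0"
  proof (rule sum_involution_eq_0[where h = prod.swap])
    fix t assume "t \<in> ?T"
    then obtain j k where t_eq: "t = (j,k)"
      and jk: "j \<in> {1..m}" "k \<in> {1..m}" "j \<notin> J" "k \<notin> J" "j \<noteq> k" "1 \<le> g j" "1 \<le> g k"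
      by (cases t) (auto simp: kdiff_support_def)
    have "(insert_sign J k :: 'k) * insert_sign (insert k J) j
        = - (insert_sign J j * insert_sign (insert j J) k)"
      using insert_sign_swap[OF fJ jk(4,3)] jk(5) by auto
    moreover have "insert j (insert k J) = insert k (insert j J)"
      "g(k := g k - 1, j := g j - 1) = g(j := g j - 1, k := g k - 1)"
      using jk(5) by (auto simp: fun_upd_twist)
    ultimately show "(case prod.swap t of (j, k) \<Rightarrow> ?g j k) + (case t of (j, k) \<Rightarrow> ?g j k) = 0"
      "prod.swap t \<in> ?T" "prod.swap (prod.swap t) = t" "prod.swap t \<noteq> t"
      unfolding t_eq using jk by (auto simp: kdiff_support_def)
  qed
  finally show ?thesis .
qed

lemma kdiff_add: "kdiff m K (\<lambda>b. u b + v b) b = kdiff m K u b + kdiff m K v b"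
  by (cases b) (simp add: kdiff_def sum.distrib algebra_simps)

lemma kdiff_uminus: "kdiff m K (\<lambda>b. - u b) b = - kdiff m K (u :: 'k::comm_ring_1 kel) b"
  by (cases b) (simp add: kdiff_def sum_negf)

lemma kmult_add_left:
  "kmult m K (\<lambda>b. u b + v b) y b = kmult m K u y b + kmult m K v y (b :: kmono)"
  by (cases "b \<in> kbasis m K")
     (simp_all add: kmult_eq_sum_kdecomp kterm_def sum.distrib algebra_simps, cases b, simp add: kmult_def)

lemma kmult_add_right:
  "kmult m K y (\<lambda>b. u b + v b) b = kmult m K y u b + kmult m K y v (b :: kmono)"
  by (cases "b \<in> kbasis m K")
     (simp_all add: kmult_eq_sum_kdecomp kterm_def sum.distrib algebra_simps, cases b, simp add: kmult_def)

lemma kmult_zero_left: "kmult m K (\<lambda>b. 0) (y :: 'k::comm_ring_1 kel) b = 0"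
  by (cases "b \<in> kbasis m K")
     (simp_all add: kmult_eq_sum_kdecomp kterm_def, cases b, simp add: kmult_def)

lemma kmult_zero_right: "kmult m K (y :: 'k::comm_ring_1 kel) (\<lambda>b. 0) b = 0"
  by (cases "b \<in> kbasis m K")
     (simp_all add: kmult_eq_sum_kdecomp kterm_def, cases b, simp add: kmult_def)

lemma kbar_add: "kbar (\<lambda>b. u b + v b) b = kbar u b + kbar v (b :: kmono)"
  by (cases b) (simp add: kbar_def algebra_simps)

lemma kbar_eq_kparity_uminus: "kbar x b = kparity (\<lambda>b. - x b) (b :: kmono)"
  by (cases b) (simp add: kbar_def kparity_def)

lemma kbar_kdiff: "kbar (kdiff m K y) b = kdiff m K (kparity (y :: 'k::comm_ring_1 kel)) b"
proof (cases "b \<in> kbasis m K")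
  case True
  obtain J g where b_eq: "b = (J,g)" by fastforce
  have kb: "(J,g) \<in> kbasis m K" using True b_eq by simp
  show ?thesis unfolding b_eq kbar_def using kb finite_kbasis_fst[OF kb]
    by (simp add: kdiff_eq_sum[OF kb] kparity_def sum_distrib_left kdiff_support_def algebra_simps
        sum_negf)
next
  case False
  then show ?thesis by (cases b) (simp add: kdiff_def kbar_def)
qed

lemma kmult_kdiff_cycle:
  assumes "simplicial_complex m K" "kdiff m K z = (\<lambda>_. 0)"
  shows "kmult m K (kdiff m K y) z b = kdiff m K (kmult m K y z) b"
  using kdiff_kmult[OF assms(1), of y z b] by (simp add: assms(2) kmult_zero_right)

lemma kmult_kbar_cycle_kdiff:
  assumes "simplicial_complex m K" "kdiff m K z = (\<lambda>_. 0)"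
  shows "kmult m K (kbar z) (kdiff m K y) b = kdiff m K (kmult m K (\<lambda>b. - z b) y) b"
proof -
  have "kdiff m K (\<lambda>b. - z b) = (\<lambda>_. 0)"
    by (rule ext) (simp add: kdiff_uminus assms(2))
  moreover have "kparity (\<lambda>b. - z b) = kbar z" by (simp add: kbar_eq_kparity_uminus fun_eq_iff)
  ultimately show ?thesis
    using kdiff_kmult[OF assms(1), of "\<lambda>b. - z b" y b] by (simp add: kmult_zero_left)
qed

section \<open>A cocycle detecting the product\<close>

text \<open>Pairing with \<open>\<Sum>\<^bsub>a\<in>I1, a'\<in>I2\<^esub> u\<^sub>a u\<^bsub>a'\<^esub> v\<^bsub>I1\<union>I2-{a,a'}\<^esub>\<close> (in the dual basis). When the full
  subcomplex on \<open>I1 \<union> I2\<close> is \<open>\<partial>\<Delta>\<^bsup>I1\<^esup> * \<partial>\<Delta>\<^bsup>I2\<^esup>\<close> this is a Koszul cocycle; it detects the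
  product of the classes of \<open>u\<^sub>i v\<^bsub>I1-i\<^esub>\<close> and \<open>u\<^bsub>i'\<^esub> v\<^bsub>I2-i'\<^esub>\<close>.\<close>

definition join_cocycle :: "nat set \<Rightarrow> nat set \<Rightarrow> 'k::comm_ring_1 kel \<Rightarrow> 'k" where
  "join_cocycle I1 I2 x =
     (\<Sum>q\<in>I1 \<times> I2.
        ext_sign {fst q} {snd q} * x ({fst q, snd q}, indicator (I1 \<union> I2 - {fst q, snd q})))"

lemma ext_sign_singleton: "(ext_sign {a} {b} :: 'k::comm_ring_1) = (if b < a then -1 else 1)"
proof -
  have "{(x, y). x \<in> {a} \<and> y \<in> {b} \<and> y < x} = (if b < a then {(a,b)} else {})" by auto
  then show ?thesis unfolding ext_sign_def by simp
qed

lemma insert_sign_doubleton: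
  "a \<noteq> b \<Longrightarrow>
    (insert_sign {a,b} j :: 'k::comm_ring_1) = (if a < j then -1 else 1) * (if b < j then -1 else 1)"
proof -
  assume "a \<noteq> b"
  moreover have "{l \<in> {b}. l < j} = (if b < j then {b} else {})" by auto
  then have "count_below {b} j = (if b < j then 1 else 0)" unfolding count_below_def by simp
  ultimately show ?thesis using count_below_insert[of "{b}" a j] unfolding insert_sign_def
    by (auto simp: power_add)
qed

lemma exchange_sign_left:
  assumes "a \<noteq> j" "a' \<noteq> a" "a' \<noteq> j"
  shows "(ext_sign {j} {a'} :: 'k::comm_ring_1) * insert_sign {j, a'} a
       = - (ext_sign {a} {a'} * insert_sign {a, a'} j)"
  using assms unfolding ext_sign_singleton insert_sign_doubleton[OF assms(3)[symmetric]]
    insert_sign_doubleton[OF assms(2)[symmetric]]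
  by (cases "a < j"; cases "a' < a"; cases "a' < j") auto

lemma exchange_sign_right:
  assumes "a \<noteq> j" "a' \<noteq> a" "a' \<noteq> j"
  shows "(ext_sign {a} {j} :: 'k::comm_ring_1) * insert_sign {a, j} a'
       = - (ext_sign {a} {a'} * insert_sign {a, a'} j)"
  using assms unfolding ext_sign_singleton insert_sign_doubleton[OF assms(1)]
    insert_sign_doubleton[OF assms(2)[symmetric]]
  by (cases "a < j"; cases "a' < a"; cases "a' < j") auto

lemma kbasis_indicator:
  assumes "X \<subseteq> {1..m}" "U \<subseteq> {1..m}" "X \<in> K"
  shows "(U, indicator X) \<in> kbasis m K"
proof -
  have "{i. indicator X i \<noteq> 0} = X" by (auto simp: indicator_def)
  then show ?thesis using assms unfolding kbasis_def by (auto simp: indicator_def)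
qed

lemma join_cocycle_kdiff:
  assumes sub: "I1 \<subseteq> {1..m}" "I2 \<subseteq> {1..m}" and dj: "I1 \<inter> I2 = {}"
    and faces: "\<forall>a\<in>I1. \<forall>a'\<in>I2. I1 \<union> I2 - {a,a'} \<in> K"
  shows "join_cocycle I1 I2 (kdiff m K (w :: 'k::comm_ring_1 kel)) = 0"
proof -
  let ?S = "I1 \<union> I2"
  have fS: "finite ?S" using sub finite_subset by (meson finite_Un finite_atLeastAtMost)
  let ?G = "\<lambda>q j. ext_sign {fst q} {snd q} * insert_sign {fst q, snd q} j
                   * (w (insert j {fst q, snd q}, indicator (?S - insert j {fst q, snd q})) :: 'k)"
  let ?F = "case_prod ?G"
  let ?T = "Sigma (I1 \<times> I2) (\<lambda>q. ?S - {fst q, snd q})"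
  let ?h = "\<lambda>(q,j). if j \<in> I1 then ((j, snd q), fst q) else ((fst q, j), snd q)"
  have "join_cocycle I1 I2 (kdiff m K w) = (\<Sum>q\<in>I1 \<times> I2. \<Sum>j\<in>?S - {fst q, snd q}. ?G q j)"
    unfolding join_cocycle_def
  proof (rule sum.cong[OF refl])
    fix q assume "q \<in> I1 \<times> I2"
    then obtain a a' where q: "q = (a,a')" and a: "a \<in> I1" "a' \<in> I2" by blast
    have kb: "({a,a'}, indicator (?S - {a,a'})) \<in> kbasis m K"
      by (rule kbasis_indicator) (use sub a faces in auto)
    have support: "kdiff_support m ({a,a'}, indicator (?S - {a,a'})) = ?S - {a,a'}"
      using sub by (auto simp: kdiff_support_def indicator_def)
    have upd: "(indicator (?S - {a,a'}))(j := indicator (?S - {a,a'}) j - 1)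
        = (indicator (?S - insert j {a,a'}) :: nat \<Rightarrow> nat)" if "j \<in> ?S - {a,a'}" for j
      using that by (auto simp: indicator_def fun_eq_iff)
    show "ext_sign {fst q} {snd q} * kdiff m K w ({fst q, snd q}, indicator (?S - {fst q, snd q}))
        = (\<Sum>j\<in>?S - {fst q, snd q}. ?G q j)"
      unfolding q fst_conv snd_conv kdiff_eq_sum[OF kb] support sum_distrib_left
      by (rule sum.cong[OF refl], subst upd) (simp_all add: mult.assoc)
  qed
  also have "\<dots> = sum ?F ?T" by (rule sum.Sigma) (use fS sub finite_subset in auto)
  also have "\<dots> = 0"
  proof (rule sum_involution_eq_0[where h = ?h])
    fix t assume "t \<in> ?T"
    then obtain a a' j where t_eq: "t = ((a,a'),j)"
      and h: "a \<in> I1" "a' \<in> I2" "j \<in> ?S" "j \<noteq> a" "j \<noteq> a'"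
      by (metis (no_types, lifting) SigmaE insert_iff mem_Sigma_iff DiffE prod.collapse)
    have "a \<noteq> a'" "a \<notin> I2" "a' \<notin> I1" using h dj by auto
    have "?F (?h t) + ?F t = 0 \<and> ?h t \<in> ?T \<and> ?h (?h t) = t \<and> ?h t \<noteq> t"
    proof (cases "j \<in> I1")
      case True
      have "(ext_sign {j} {a'} :: 'k) * insert_sign {j, a'} a
          = - (ext_sign {a} {a'} * insert_sign {a, a'} j)"
        by (rule exchange_sign_left) (use h \<open>a \<noteq> a'\<close> in auto)
      moreover have "insert a {j, a'} = insert j {a, a'}" by auto
      moreover have "?h t = ((j,a'),a)" "?h ((j,a'),a) = t" using True h(1) unfolding t_eq by auto
      ultimately show ?thesis unfolding t_eq using True h \<open>a \<noteq> a'\<close> \<open>a' \<notin> I1\<close> by simp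
    next
      case False
      have "(ext_sign {a} {j} :: 'k) * insert_sign {a, j} a'
          = - (ext_sign {a} {a'} * insert_sign {a, a'} j)"
        by (rule exchange_sign_right) (use h \<open>a \<noteq> a'\<close> in auto)
      moreover have "insert a' {a, j} = insert j {a, a'}" by auto
      moreover have "?h t = ((a,j),a')" "?h ((a,j),a') = t" using False \<open>a' \<notin> I1\<close> unfolding t_eq by auto
      ultimately show ?thesis unfolding t_eq using False h \<open>a \<noteq> a'\<close> \<open>a \<notin> I2\<close> by auto
    qed
    then show "?F (?h t) + ?F t = 0" "?h t \<in> ?T" "?h (?h t) = t" "?h t \<noteq> t" by blast+
  qed
  finally show ?thesis .
qed



definition kunit :: "kmono \<Rightarrow> 'k::comm_ring_1 kel" where
  "kunit e = (\<lambda>b. if b = e then 1 else 0)"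

lemma kpositive_kunit: "finite A \<Longrightarrow> A \<noteq> {} \<Longrightarrow> kpositive m (kunit (A, \<alpha>))"
  unfolding kpositive_def ksupp_def kunit_def kdeg_def by (auto simp: card_gt_0_iff)

lemma kcycle_kunit_minimal_nonface:
  assumes "X \<subseteq> {1..m}" "i \<in> X" "X - {i} \<in> K" "X \<notin> K"
  shows "kcycle m K (kunit ({i}, indicator (X - {i})) :: 'k::comm_ring_1 kel)" (is "kcycle m K ?u")
proof -
  have "({i}, indicator (X - {i})) \<in> kbasis m K" by (rule kbasis_indicator) (use assms in auto)
  moreover have "ksupp ?u \<subseteq> {({i}, indicator (X - {i}))}" unfolding ksupp_def kunit_def by auto
  ultimately have "kelem m K ?u" unfolding kelem_def using finite_subset by auto
  moreover have "kdiff m K ?u b = 0" for b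
  proof (cases b)
    case (Pair J g)
    have vanish: "?u (insert j J, g(j := g j - 1)) = 0"
      if "(J,g) \<in> kbasis m K" "j \<in> kdiff_support m (J,g)" for j
    proof (rule ccontr)
      assume "?u (insert j J, g(j := g j - 1)) \<noteq> 0"
      then have eq: "insert j J = {i}" "g(j := g j - 1) = indicator (X - {i})"
        unfolding kunit_def by (auto split: if_splits)
      moreover have "j \<notin> J" "1 \<le> g j" using that(2) by (auto simp: kdiff_support_def)
      ultimately have "j = i" by auto
      have "g k = indicator X k" for k
        using fun_cong[OF eq(2), of k] \<open>1 \<le> g j\<close> \<open>j = i\<close> assms(2)
        by (cases "k = i") (auto simp: indicator_def)
      then have "{k. g k \<noteq> 0} = X" by (auto simp: indicator_def)
      then show False using kbasisD[OF that(1)] assms(4) by simp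
    qed
    show ?thesis
    proof (cases "(J,g) \<in> kbasis m K")
      case True
      then show ?thesis unfolding Pair kdiff_eq_sum[OF True] fst_conv snd_conv
        by (metis (no_types, lifting) mult_zero_right sum.neutral vanish)
    next
      case False
      then show ?thesis unfolding Pair by (simp add: kdiff_def)
    qed
  qed
  ultimately show ?thesis unfolding kcycle_def by auto
qed

lemma kbar_kunit_singleton: "kbar (kunit ({i}, \<alpha>)) = (kunit ({i}, \<alpha>) :: 'k::comm_ring_1 kel)"
  unfolding kbar_def kunit_def by (auto simp: fun_eq_iff)

lemma kmult_kunit:
  assumes "b \<in> kbasis m K"
  shows "kmult m K (kunit e1) (kunit e2) b
       = (if (e1, e2) \<in> kdecomp b then ext_sign (fst e1) (fst e2) else (0::'k::comm_ring_1))"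
proof -
  have "kterm (kunit e1) (kunit e2) p = (if p = (e1, e2) then ext_sign (fst e1) (fst e2) else (0::'k))"
    for p
    unfolding kterm_def kunit_def by auto
  then show ?thesis
    unfolding kmult_eq_sum_kdecomp[OF assms] by (simp add: finite_kdecomp_kbasis[OF assms])
qed

lemma join_cocycle_kmult_kunit:
  assumes sub: "I1 \<subseteq> {1..m}" "I2 \<subseteq> {1..m}" and dj: "I1 \<inter> I2 = {}"
    and faces: "\<forall>a\<in>I1. \<forall>a'\<in>I2. I1 \<union> I2 - {a,a'} \<in> K"
    and i: "i \<in> I1" "i' \<in> I2"
  shows "join_cocycle I1 I2 (kmult m K (kbar (kunit ({i}, indicator (I1 - {i}))))
           (kunit ({i'}, indicator (I2 - {i'})))) = (1::'k::comm_ring_1)"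
proof -
  let ?e1 = "({i}, indicator (I1 - {i})) :: kmono" and ?e2 = "({i'}, indicator (I2 - {i'})) :: kmono"
  have "join_cocycle I1 I2 (kmult m K (kbar (kunit ?e1)) (kunit ?e2))
      = (\<Sum>q\<in>I1 \<times> I2. if q = (i,i') then 1 else 0 :: 'k)"
    unfolding join_cocycle_def kbar_kunit_singleton
  proof (rule sum.cong[OF refl])
    fix q assume "q \<in> I1 \<times> I2"
    then obtain a a' where q: "q = (a,a')" and a: "a \<in> I1" "a' \<in> I2" by blast
    have "({a,a'}, indicator (I1 \<union> I2 - {a,a'})) \<in> kbasis m K"
      by (rule kbasis_indicator) (use sub a faces in auto)
    moreover have "(?e1, ?e2) \<in> kdecomp ({a,a'}, indicator (I1 \<union> I2 - {a,a'})) \<longleftrightarrow> q = (i,i')"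
    proof
      assume "(?e1, ?e2) \<in> kdecomp ({a,a'}, indicator (I1 \<union> I2 - {a,a'}))"
      then have "{i, i'} = {a, a'}" unfolding kdecomp_iff by auto
      then show "q = (i,i')" using q a i dj by (auto simp: doubleton_eq_iff)
    next
      assume "q = (i,i')"
      then show "(?e1, ?e2) \<in> kdecomp ({a,a'}, indicator (I1 \<union> I2 - {a,a'}))"
        unfolding q kdecomp_iff using i dj by (auto simp: indicator_def)
    qed
    ultimately show "ext_sign {fst q} {snd q} * kmult m K (kunit ?e1) (kunit ?e2)
        ({fst q, snd q}, indicator (I1 \<union> I2 - {fst q, snd q})) = (if q = (i,i') then 1 else 0)"
      unfolding q by (auto simp: kmult_kunit ext_sign_singleton)
  qed
  also have "\<dots> = 1"
    using i finite_subset[OF sub(1)] finite_subset[OF sub(2)] by simp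
  finally show ?thesis .
qed

lemma join_cocycle_add:
  "join_cocycle I1 I2 (\<lambda>b. u b + v b)
     = join_cocycle I1 I2 u + join_cocycle I1 I2 (v :: 'k::comm_ring_1 kel)"
  unfolding join_cocycle_def by (simp add: sum.distrib algebra_simps)

section \<open>Non-Golodness\<close>

lemma kmult_kbar_homologous_cycles:
  assumes sc: "simplicial_complex m K"
    and c1: "kdiff m K c1 = (\<lambda>_. 0)" and c2: "kdiff m K c2 = (\<lambda>_. 0)"
    and y1: "kdiff m K y1 = (\<lambda>b. a1 b - c1 b)" and y2: "kdiff m K y2 = (\<lambda>b. a2 b - c2 b)"
  shows "kmult m K (kbar a1) a2 b = kmult m K (kbar c1) c2 b
           + kdiff m K (\<lambda>b. kmult m K (kparity y1) a2 b + kmult m K (\<lambda>b. - c1 b) y2 b) b"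
proof -
  have a1: "a1 = (\<lambda>b. c1 b + kdiff m K y1 b)" and a2: "a2 = (\<lambda>b. c2 b + kdiff m K y2 b)"
    using y1 y2 by (simp_all add: fun_eq_iff)
  have "kdiff m K a2 = (\<lambda>_. 0)"
    by (rule ext) (simp add: a2 kdiff_add c2 kdiff_kdiff[OF sc])
  have "kbar a1 = (\<lambda>b. kbar c1 b + kdiff m K (kparity y1) b)"
    by (rule ext) (simp add: a1 kbar_add kbar_kdiff)
  then have "kmult m K (kbar a1) a2 b
      = kmult m K (kbar c1) a2 b + kmult m K (kdiff m K (kparity y1)) a2 b"
    by (simp add: kmult_add_left)
  also have "kmult m K (kbar c1) a2 b = kmult m K (kbar c1) c2 b + kmult m K (kbar c1) (kdiff m K y2) b"
    by (subst a2) (rule kmult_add_right)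
  also have "kmult m K (kbar c1) (kdiff m K y2) b = kdiff m K (kmult m K (\<lambda>b. - c1 b) y2) b"
    by (rule kmult_kbar_cycle_kdiff[OF sc c1])
  also have "kmult m K (kdiff m K (kparity y1)) a2 b = kdiff m K (kmult m K (kparity y1) a2) b"
    by (rule kmult_kdiff_cycle[OF sc \<open>kdiff m K a2 = (\<lambda>_. 0)\<close>])
  finally show ?thesis by (simp add: kdiff_add)
qed

lemma kmult_kbar_homologous:
  assumes "simplicial_complex m K" "kcycle m K c1" "kcycle m K c2"
    and "khomologous m K a1 c1" "khomologous m K a2 c2"
  obtains W where "kmult m K (kbar a1) a2 = (\<lambda>b. kmult m K (kbar c1) c2 b + kdiff m K W b)"
proof -
  obtain y1 y2 where "kdiff m K y1 = (\<lambda>b. a1 b - c1 b)" "kdiff m K y2 = (\<lambda>b. a2 b - c2 b)"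
    using assms(4,5) unfolding khomologous_def kboundary_def by blast
  with assms(1-3) show ?thesis
    using that kmult_kbar_homologous_cycles[OF assms(1)] unfolding kcycle_def by blast
qed

lemma golod_product_kboundary:
  fixes c1 c2 :: "'k::comm_ring_1 kel"
  assumes "golod TYPE('k) m K"
    and "kcycle m K c1" "kpositive m c1" "kcycle m K c2" "kpositive m c2"
  obtains a1 a2 where "khomologous m K a1 c1" "khomologous m K a2 c2"
    "kboundary m K (kmult m K (kbar a1) a2)"
proof -
  define c :: "nat \<Rightarrow> 'k kel" where "c = (\<lambda>k. if k = 1 then c1 else c2)"
  have cycles: "\<forall>k\<in>{1..2}. kcycle m K (c k) \<and> kpositive m (c k)"
    using assms(2-5) unfolding c_def by auto
  have "khomologous m K x x" if "kelem m K x" for x :: "'k kel"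
    unfolding khomologous_def kboundary_def
    by (rule exI[of _ "\<lambda>_. 0"]) (auto simp: kelem_def ksupp_def kdiff_def)
  then have "defining_system m K 2 c (\<lambda>i j. c i)"
    using cycles unfolding defining_system_def kcycle_def by auto
  then obtain A where A: "defining_system m K 2 c A" "kboundary m K (massey_value m K 2 A)"
    using assms(1) cycles unfolding golod_def by (metis order_refl)
  have "massey_value m K 2 A = kmult m K (kbar (A 1 1)) (A 2 2)"
    unfolding massey_value_def by (simp add: numeral_2_eq_2)
  moreover have hom: "\<forall>k\<in>{1..2}. khomologous m K (A k k) (c k)"
    using A(1) unfolding defining_system_def by blast
  then have "khomologous m K (A 1 1) c1" "khomologous m K (A 2 2) c2"
    using bspec[OF hom, of 1] bspec[OF hom, of 2] unfolding c_def by simp_all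
  ultimately show ?thesis using that A(2) by metis
qed

lemma full_subcomplex_join_boundary_mem:
  assumes "full_subcomplex K (I \<union> J) = sc_join (simplex_boundary I) (simplex_boundary J)"
    and "I \<inter> J = {}" and "s \<subseteq> I \<union> J"
  shows "s \<in> K \<longleftrightarrow> \<not> I \<subseteq> s \<and> \<not> J \<subseteq> s"
proof -
  have "s \<in> K \<longleftrightarrow> s \<in> sc_join (simplex_boundary I) (simplex_boundary J)"
    using assms(3) unfolding assms(1)[symmetric] full_subcomplex_def by simp
  also have "\<dots> \<longleftrightarrow> (\<exists>\<sigma> \<tau>. s = \<sigma> \<union> \<tau> \<and> \<sigma> \<subset> I \<and> \<tau> \<subset> J)"
    unfolding sc_join_def simplex_boundary_def by blast
  also have "\<dots> \<longleftrightarrow> \<not> I \<subseteq> s \<and> \<not> J \<subseteq> s"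
  proof
    assume "\<exists>\<sigma> \<tau>. s = \<sigma> \<union> \<tau> \<and> \<sigma> \<subset> I \<and> \<tau> \<subset> J"
    then obtain \<sigma> \<tau> where "s = \<sigma> \<union> \<tau>" "\<sigma> \<subset> I" "\<tau> \<subset> J" by blast
    with assms(2) show "\<not> I \<subseteq> s \<and> \<not> J \<subseteq> s" by blast
  next
    assume "\<not> I \<subseteq> s \<and> \<not> J \<subseteq> s"
    with assms(3) have "s = (s \<inter> I) \<union> (s \<inter> J) \<and> s \<inter> I \<subset> I \<and> s \<inter> J \<subset> J" by blast
    then show "\<exists>\<sigma> \<tau>. s = \<sigma> \<union> \<tau> \<and> \<sigma> \<subset> I \<and> \<tau> \<subset> J" by blast
  qed
  finally show ?thesis .
qed

lemma full_subcomplex_join_boundary_faces: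
  assumes "full_subcomplex K (I \<union> J) = sc_join (simplex_boundary I) (simplex_boundary J)"
    and "I \<inter> J = {}" "I \<noteq> {}" "J \<noteq> {}"
  shows "\<forall>a\<in>I. \<forall>a'\<in>J. I \<union> J - {a,a'} \<in> K"
    and "I \<notin> K" "\<forall>a\<in>I. I - {a} \<in> K"
    and "J \<notin> K" "\<forall>a'\<in>J. J - {a'} \<in> K"
proof -
  note mem = full_subcomplex_join_boundary_mem[OF assms(1,2)]
  show "\<forall>a\<in>I. \<forall>a'\<in>J. I \<union> J - {a,a'} \<in> K"
    using assms(2) by (auto simp: mem)
  have "I - {a} \<in> K" if "a \<in> I" for a
    using mem[of "I - {a}"] that assms(2,4) by auto
  moreover have "J - {a'} \<in> K" if "a' \<in> J" for a'
    using mem[of "J - {a'}"] that assms(2,3) by auto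
  ultimately show "\<forall>a\<in>I. I - {a} \<in> K" "\<forall>a'\<in>J. J - {a'} \<in> K" by blast+
  show "I \<notin> K" "J \<notin> K"
    using assms(2-4) mem[of I] mem[of J] by auto
qed

theorem lemma2p4:
  fixes K :: "nat set set" and m :: nat and I J :: "nat set"
  assumes "simplicial_complex m K"
    and "I \<noteq> {}" and "J \<noteq> {}" and "I \<subseteq> {1..m}" and "J \<subseteq> {1..m}" and "I \<inter> J = {}"
    and "full_subcomplex K (I \<union> J) = sc_join (simplex_boundary I) (simplex_boundary J)"
    and "(0::'k::comm_ring_1) \<noteq> 1"
  shows "\<not> golod TYPE('k) m K"
proof
  assume golod: "golod TYPE('k) m K"
  note faces = full_subcomplex_join_boundary_faces[OF assms(7,6,2,3)]
  obtain i i' where i: "i \<in> I" and i': "i' \<in> J" using assms(2,3) by blast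
  define c1 :: "'k kel" where "c1 = kunit ({i}, indicator (I - {i}))"
  define c2 :: "'k kel" where "c2 = kunit ({i'}, indicator (J - {i'}))"
  have c1: "kcycle m K c1" "kpositive m c1" unfolding c1_def
    using kcycle_kunit_minimal_nonface[OF assms(4) i, where K = K] faces i by (auto simp: kpositive_kunit)
  have c2: "kcycle m K c2" "kpositive m c2" unfolding c2_def
    using kcycle_kunit_minimal_nonface[OF assms(5) i', where K = K] faces i' by (auto simp: kpositive_kunit)
  obtain a1 a2 where homologous: "khomologous m K a1 c1" "khomologous m K a2 c2"
      and "kboundary m K (kmult m K (kbar a1) a2)"
    by (rule golod_product_kboundary[OF golod c1 c2])
  then obtain w where w: "kdiff m K w = kmult m K (kbar a1) a2" unfolding kboundary_def by blast
  obtain W where "kmult m K (kbar a1) a2 = (\<lambda>b. kmult m K (kbar c1) c2 b + kdiff m K W b)"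
    by (rule kmult_kbar_homologous[OF assms(1) c1(1) c2(1) homologous])
  then have "join_cocycle I J (kdiff m K w)
      = join_cocycle I J (kmult m K (kbar c1) c2) + join_cocycle I J (kdiff m K W)"
    by (simp add: w join_cocycle_add)
  also have "\<dots> = 1"
    unfolding c1_def c2_def join_cocycle_kdiff[OF assms(4-6) faces(1)]
      join_cocycle_kmult_kunit[OF assms(4-6) faces(1) i i'] by simp
  finally have "(0::'k) = 1" unfolding join_cocycle_kdiff[OF assms(4-6) faces(1)] .
  with assms(8) show False ..
qed

end
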